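(* $R(B_2,B_8) = 21$.
   Context: For graphs $G,H$, the Ramsey number $R(G,H)$ is the smallest integer $N$ such that every red/blue coloring of the edges of $K_N$ contains a red copy of $G$ (as a subgraph, not necessarily induced) or a blue copy of $H$. The book $B_k$ is the graph on $k+2$ vertices consisting of an edge $uv$ together with $k$ further vertices, each adjacent exactly to $u$ and $v$. *)

theory Defs
  imports Main
begin

type_synonym graph = "nat set \<times> nat set set"

definition simple_graph :: "graph \<Rightarrow> bool" where
  "simple_graph G \<longleftrightarrow> finite (fst G) \<and>
     (\<forall>e\<in>snd G. e \<subseteq> fst G \<and> card e = 2)"

definition book :: "nat \<Rightarrow> graph" where
  "book k = ({0..<k+2},
             {{0,1}} \<union> {{0,i} | i. 2 \<le> i \<and> i < k+2} \<union> {{1,i} | i. 2 \<le> i \<and> i < k+2})"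

text \<open>A red/blue colouring of the edges of K_N (vertex set {0..<N}) is a predicate
  col on 2-element sets: col e = True means e is red, False means e is blue.\<close>
definition has_copy :: "graph \<Rightarrow> nat \<Rightarrow> (nat set \<Rightarrow> bool) \<Rightarrow> bool" where
  "has_copy G N col \<longleftrightarrow>
     (\<exists>f. inj_on f (fst G) \<and> f ` fst G \<subseteq> {0..<N} \<and> (\<forall>e\<in>snd G. col (f ` e)))"

definition ramsey_prop :: "graph \<Rightarrow> graph \<Rightarrow> nat \<Rightarrow> bool" where
  "ramsey_prop G H N \<longleftrightarrow>
     (\<forall>col :: nat set \<Rightarrow> bool. has_copy G N col \<or> has_copy H N (\<lambda>e. \<not> col e))"

definition ramsey_number :: "graph \<Rightarrow> graph \<Rightarrow> nat" where
  "ramsey_number G H = (LEAST N. ramsey_prop G H N)"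

end

theory Submission
  imports Defs
begin

(*
  Lower bound: an explicit red graph on 20 vertices in which adjacent vertices have at most one
  common neighbour and distinct non-adjacent vertices at most seven common non-neighbours.

  Upper bound: take a colouring of K_21 without red B_2 and blue B_8 and let r(v), b(v) \<ge> 0 be
  the slacks of these two conditions summed over the red, resp. blue, neighbours of v. Counting
  triangles and paths of length two shows that r(v) + b(v) + 3 (deg v - 9)^2 - 3 sums to zero,
  and parity shows that r(v), b(v) are odd when deg v is odd. A local analysis around the vertices
  of degree 9 with r(v) = b(v) = 1 then forces every term to vanish, so the red graph is strongly
  regular with parameters (21, 8, 1, 4). No such graph exists: its adjacency matrix would satisfy
  trace A^5 = 27048, but trace A^5 counts closed walks of length 5, whose rotations come in orbits
  of size 5.
*)

lemma int_card_filter_eq_sum: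
  "finite A \<Longrightarrow> int (card {x\<in>A. P x}) = (\<Sum>x\<in>A. if P x then 1 else 0)"
  by (simp add: sum.inter_filter[symmetric])

lemma even_sum_sum_symmetric:
  fixes f :: "'a \<Rightarrow> 'a \<Rightarrow> int"
  assumes "finite A" "\<And>x y. f x y = f y x" "\<And>x. f x x = 0"
  shows "even (\<Sum>x\<in>A. \<Sum>y\<in>A. f x y)"
  using assms(1)
proof (induction A rule: finite_induct)
  case (insert a A)
  have "(\<Sum>x\<in>insert a A. \<Sum>y\<in>insert a A. f x y) =
        (\<Sum>x\<in>A. \<Sum>y\<in>A. f x y) + 2 * (\<Sum>y\<in>A. f a y)"
    using insert.hyps assms(2,3) by (simp add: sum.distrib algebra_simps)
  then show ?case using insert.IH by simp
qed simp

fun rotations :: "'a \<times> 'a \<times> 'a \<times> 'a \<times> 'a \<Rightarrow> ('a \<times> 'a \<times> 'a \<times> 'a \<times> 'a) set" where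
  "rotations (a,b,c,d,e) = {(a,b,c,d,e), (b,c,d,e,a), (c,d,e,a,b), (d,e,a,b,c), (e,a,b,c,d)}"

lemma rotations_eq_if_mem: "x \<in> rotations t \<Longrightarrow> rotations x = rotations t"
proof -
  obtain a b c d e where t: "t = (a,b,c,d,e)" by (cases t)
  assume "x \<in> rotations t"
  then have "x = (a,b,c,d,e) \<or> x = (b,c,d,e,a) \<or> x = (c,d,e,a,b) \<or> x = (d,e,a,b,c) \<or> x = (e,a,b,c,d)"
    using t by simp
  then show ?thesis using t by (elim disjE) auto
qed

lemma mem_rotations_self: "t \<in> rotations t"
  by (cases t) auto

text \<open>A non-constant 5-tuple has 5 distinct rotations, as 5 is prime.\<close>
lemma five_dvd_card_if_rotation_closed:
  fixes S :: "('a \<times> 'a \<times> 'a \<times> 'a \<times> 'a) set"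
  assumes fin: "finite S"
    and closed: "\<And>a b c d e. (a,b,c,d,e) \<in> S \<Longrightarrow> (b,c,d,e,a) \<in> S"
    and distinct: "\<And>a b c d e. (a,b,c,d,e) \<in> S \<Longrightarrow> a \<noteq> b"
  shows "5 dvd card S"
proof -
  have orbit: "rotations t \<subseteq> S \<and> card (rotations t) = 5" if "t \<in> S" for t
  proof -
    obtain a b c d e where t: "t = (a,b,c,d,e)" by (cases t)
    have "(b,c,d,e,a) \<in> S" "(c,d,e,a,b) \<in> S" "(d,e,a,b,c) \<in> S" "(e,a,b,c,d) \<in> S"
      using closed that t by blast+
    moreover from this have "a \<noteq> b" "b \<noteq> c" "c \<noteq> d" "d \<noteq> e" "e \<noteq> a"
      using distinct that t by blast+
    ultimately show ?thesis using that t by auto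
  qed
  have partition: "\<Union>(rotations ` S) = S"
    using orbit mem_rotations_self by blast
  have "5 * card (rotations ` S) = card (\<Union>(rotations ` S))"
  proof (rule card_partition)
    show "finite (rotations ` S)" "finite (\<Union>(rotations ` S))"
      using fin partition by simp_all
    show "card c = 5" if "c \<in> rotations ` S" for c
      using that orbit by blast
    show "c1 \<inter> c2 = {}" if "c1 \<in> rotations ` S" "c2 \<in> rotations ` S" "c1 \<noteq> c2" for c1 c2
      using that rotations_eq_if_mem by blast
  qed
  then show ?thesis by (metis dvd_triv_left partition)
qed

section \<open>Book copies and Ramsey numbers\<close>

lemma has_copy_mono: "has_copy G N col \<Longrightarrow> N \<le> M \<Longrightarrow> has_copy G M col"
  unfolding has_copy_def by fastforce

lemma ramsey_prop_mono: "ramsey_prop G H N \<Longrightarrow> N \<le> M \<Longrightarrow> ramsey_prop G H M"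
  unfolding ramsey_prop_def using has_copy_mono by blast

lemma ramsey_number_eqI:
  assumes "ramsey_prop G H (Suc n)" "\<not> ramsey_prop G H n"
  shows "ramsey_number G H = Suc n"
  unfolding ramsey_number_def
proof (rule Least_equality)
  show "Suc n \<le> m" if "ramsey_prop G H m" for m
    using that assms(2) ramsey_prop_mono[of G H m n] by fastforce
qed (fact assms(1))

lemma has_book_copy_iff:
  "has_copy (book k) N col \<longleftrightarrow>
     (\<exists>u<N. \<exists>v<N. u \<noteq> v \<and> col {u, v} \<and>
        k \<le> card {w. w < N \<and> w \<noteq> u \<and> w \<noteq> v \<and> col {u, w} \<and> col {v, w}})"
    (is "_ \<longleftrightarrow> (\<exists>u<N. \<exists>v<N. _ \<and> _ \<and> k \<le> card (?P u v))")
proof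
  assume "has_copy (book k) N col"
  then obtain f where inj: "inj_on f {0..<k+2}" and img: "f ` {0..<k+2} \<subseteq> {0..<N}"
    and edges: "\<forall>e\<in>snd (book k). col (f ` e)"
    by (auto simp: has_copy_def book_def)
  have pages: "f ` {2..<k+2} \<subseteq> ?P (f 0) (f 1)"
  proof
    fix x assume "x \<in> f ` {2..<k+2}"
    then obtain i where i: "2 \<le> i" "i < k+2" "x = f i" by auto
    have "{0,i} \<in> snd (book k)" "{1,i} \<in> snd (book k)" using i by (auto simp: book_def)
    moreover have "f i < N" using i img by (auto simp: image_subset_iff)
    ultimately show "x \<in> ?P (f 0) (f 1)"
      using i edges inj_onD[OF inj, of i 0] inj_onD[OF inj, of i 1] by auto
  qed
  have "k = card (f ` {2..<k+2})"
    using inj by (simp add: card_image inj_on_subset)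
  also have "\<dots> \<le> card (?P (f 0) (f 1))"
    by (rule card_mono[OF _ pages]) auto
  finally have "k \<le> card (?P (f 0) (f 1))" .
  moreover have "f 0 < N" "f 1 < N" using img by (auto simp: image_subset_iff)
  moreover have "f 0 \<noteq> f 1" using inj_onD[OF inj, of 0 1] by auto
  moreover have "col {f 0, f 1}" using edges by (auto simp: book_def)
  ultimately show "\<exists>u<N. \<exists>v<N. u \<noteq> v \<and> col {u, v} \<and> k \<le> card (?P u v)"
    by blast
next
  assume "\<exists>u<N. \<exists>v<N. u \<noteq> v \<and> col {u, v} \<and> k \<le> card (?P u v)"
  then obtain u v where uv: "u < N" "v < N" "u \<noteq> v" "col {u, v}" and "k \<le> card (?P u v)"
    by blast
  then obtain T where T: "T \<subseteq> ?P u v" "card T = k"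
    by (meson obtain_subset_with_card_n)
  moreover have "finite T" using T(1) by (rule finite_subset) auto
  ultimately obtain g where g: "bij_betw g {2..<k+2} T"
    using finite_same_card_bij[of "{2..<k+2}" T] by auto
  define f where "f i = (if i = 0 then u else if i = 1 then v else g i)" for i
  have page: "g i < N \<and> g i \<noteq> u \<and> g i \<noteq> v \<and> col {u, g i} \<and> col {v, g i}"
    if "2 \<le> i" "i < k+2" for i
    using bij_betw_apply[OF g] that T(1) by auto
  have "inj_on f {0..<k+2}"
  proof (rule inj_onI)
    fix i j assume ij: "i \<in> {0..<k+2}" "j \<in> {0..<k+2}" "f i = f j"
    have g_inj: "inj_on g {2..<k+2}" using g by (simp add: bij_betw_def)
    consider "i < 2" "j < 2" | "i < 2" "2 \<le> j" | "2 \<le> i" "j < 2" | "2 \<le> i" "2 \<le> j"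
      by linarith
    then show "i = j"
    proof cases
      case 1 then show ?thesis using ij uv(3) by (auto simp: f_def less_2_cases_iff)
    next
      case 2 then show ?thesis using ij page[of j] by (auto simp: f_def less_2_cases_iff)
    next
      case 3 then show ?thesis using ij page[of i] by (auto simp: f_def less_2_cases_iff)
    next
      case 4 then show ?thesis using ij inj_onD[OF g_inj, of i j] by (simp add: f_def)
    qed
  qed
  moreover have "f ` {0..<k+2} \<subseteq> {0..<N}"
    using page uv by (auto simp: f_def)
  moreover have "col (f ` e)" if "e \<in> snd (book k)" for e
    using that page uv(4) by (auto simp: book_def f_def insert_commute)
  moreover have "fst (book k) = {0..<k+2}" by (simp add: book_def)
  ultimately show "has_copy (book k) N col"
    unfolding has_copy_def by (intro exI[of _ f]) simp
qed

section \<open>There is no strongly regular graph with parameters (21, 8, 1, 4)\<close>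

locale graph_on =
  fixes V :: "'a set" and red :: "'a \<Rightarrow> 'a \<Rightarrow> bool"
  assumes finite_V: "finite V"
    and red_sym: "red u v \<Longrightarrow> red v u"
    and red_irrefl: "\<not> red v v"
begin

definition nbhd :: "'a \<Rightarrow> 'a set" where "nbhd v = {u\<in>V. red v u}"
definition deg :: "'a \<Rightarrow> int" where "deg v = int (card (nbhd v))"
definition codeg :: "'a \<Rightarrow> 'a \<Rightarrow> int" where "codeg u v = int (card (nbhd u \<inter> nbhd v))"
definition adj :: "'a \<Rightarrow> 'a \<Rightarrow> int" where "adj u v = (if red u v then 1 else 0)"

lemma red_commute: "red u v \<longleftrightarrow> red v u"
  using red_sym by blast

lemma adj_commute: "adj u v = adj v u"
  by (simp add: adj_def red_commute)

lemma adj_self [simp]: "adj v v = 0"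
  by (simp add: adj_def red_irrefl)

lemma finite_nbhd [simp]: "finite (nbhd v)"
  using finite_V by (simp add: nbhd_def)

lemma codeg_eq_card: "codeg u v = int (card {w\<in>V. red u w \<and> red v w})"
proof -
  have "nbhd u \<inter> nbhd v = {w\<in>V. red u w \<and> red v w}" by (auto simp: nbhd_def)
  then show ?thesis by (simp add: codeg_def)
qed

lemma codeg_commute: "codeg u v = codeg v u"
  by (simp add: codeg_def Int_commute)

lemma codeg_self: "codeg v v = deg v"
  by (simp add: codeg_def deg_def)

lemma codeg_nonneg: "codeg u v \<ge> 0"
  by (simp add: codeg_def)

lemma deg_eq_sum: "deg v = (\<Sum>u\<in>V. adj v u)"
  unfolding deg_def nbhd_def adj_def by (rule int_card_filter_eq_sum[OF finite_V])

lemma codeg_eq_sum: "codeg u v = (\<Sum>w\<in>V. adj u w * adj v w)"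
  unfolding codeg_eq_card int_card_filter_eq_sum[OF finite_V] adj_def by (rule sum.cong) auto

definition closed_walks_5 :: "('a \<times> 'a \<times> 'a \<times> 'a \<times> 'a) set" where
  "closed_walks_5 = {t \<in> V \<times> V \<times> V \<times> V \<times> V.
     case t of (a,b,c,d,e) \<Rightarrow> red a b \<and> red b c \<and> red c d \<and> red d e \<and> red e a}"

lemma card_closed_walks_5:
  "int (card closed_walks_5) =
     (\<Sum>a\<in>V. \<Sum>b\<in>V. \<Sum>c\<in>V. \<Sum>d\<in>V. \<Sum>e\<in>V. adj a b * adj b c * adj c d * adj d e * adj e a)"
proof -
  have "int (card closed_walks_5) = (\<Sum>t\<in>V \<times> V \<times> V \<times> V \<times> V.
      if (case t of (a,b,c,d,e) \<Rightarrow> red a b \<and> red b c \<and> red c d \<and> red d e \<and> red e a) then 1 else 0)"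
    unfolding closed_walks_5_def using finite_V by (intro int_card_filter_eq_sum) simp
  also have "\<dots> = (\<Sum>a\<in>V. \<Sum>b\<in>V. \<Sum>c\<in>V. \<Sum>d\<in>V. \<Sum>e\<in>V.
       if red a b \<and> red b c \<and> red c d \<and> red d e \<and> red e a then 1 else 0)"
    by (simp add: sum.cartesian_product split_def)
  also have "\<dots> = (\<Sum>a\<in>V. \<Sum>b\<in>V. \<Sum>c\<in>V. \<Sum>d\<in>V. \<Sum>e\<in>V.
       adj a b * adj b c * adj c d * adj d e * adj e a)"
    by (intro sum.cong refl) (simp add: adj_def)
  finally show ?thesis .
qed

lemma five_dvd_card_closed_walks_5: "5 dvd card closed_walks_5"
proof (rule five_dvd_card_if_rotation_closed)
  show "finite closed_walks_5"
    unfolding closed_walks_5_def using finite_V by simp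
qed (auto simp: closed_walks_5_def red_irrefl)

end

locale srg_21_8_1_4 = graph_on +
  assumes card_V: "card V = 21"
    and deg_eq_8: "v \<in> V \<Longrightarrow> deg v = 8"
    and codeg_red: "u \<in> V \<Longrightarrow> v \<in> V \<Longrightarrow> red u v \<Longrightarrow> codeg u v = 1"
    and codeg_blue: "u \<in> V \<Longrightarrow> v \<in> V \<Longrightarrow> u \<noteq> v \<Longrightarrow> \<not> red u v \<Longrightarrow> codeg u v = 4"
begin

text \<open>In matrix form: A^2 = 4 I - 3 A + 4 J, hence A^3 = -12 I + 13 A + 20 J.\<close>
lemma codeg_eq: "x \<in> V \<Longrightarrow> y \<in> V \<Longrightarrow> codeg x y = 4 + 4 * (if x = y then 1 else 0) - 3 * adj x y"
  using codeg_red codeg_blue codeg_self deg_eq_8 by (auto simp: adj_def red_irrefl)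

lemma sum_adj_codeg:
  assumes c: "c \<in> V" and a: "a \<in> V"
  shows "(\<Sum>d\<in>V. adj c d * codeg d a) = 20 + 13 * adj c a - 12 * (if c = a then 1 else 0)"
proof -
  have "(\<Sum>d\<in>V. adj c d * codeg d a) =
      (\<Sum>d\<in>V. 4 * adj c d + 4 * (if d = a then adj c d else 0) - 3 * (adj c d * adj a d))"
    by (rule sum.cong) (auto simp: codeg_eq a adj_commute[of _ a] algebra_simps)
  also have "\<dots> = 4 * deg c + 4 * adj c a - 3 * codeg c a"
    using a finite_V
    by (simp add: sum_subtractf sum.distrib sum_distrib_left[symmetric] deg_eq_sum codeg_eq_sum)
  finally show ?thesis using deg_eq_8 c codeg_eq[OF c a] by simp
qed

lemma sum_codeg_sum_adj_codeg:
  assumes a: "a \<in> V"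
  shows "(\<Sum>c\<in>V. codeg a c * (\<Sum>d\<in>V. adj c d * codeg d a)) = 1288"
proof -
  have "(\<Sum>c\<in>V. codeg a c * (\<Sum>d\<in>V. adj c d * codeg d a)) =
      (\<Sum>c\<in>V. 80 - 16 * (if c = a then 1 else 0) - 47 * adj a c)"
  proof (rule sum.cong[OF refl])
    fix c assume c: "c \<in> V"
    show "codeg a c * (\<Sum>d\<in>V. adj c d * codeg d a) = 80 - 16 * (if c = a then 1 else 0) - 47 * adj a c"
      unfolding sum_adj_codeg[OF c a] using codeg_eq[OF a c] by (auto simp: adj_def red_commute red_irrefl)
  qed
  also have "\<dots> = 80 * 21 - 16 - 47 * 8"
    using a deg_eq_8 finite_V
    by (simp add: sum_subtractf sum_distrib_left[symmetric] deg_eq_sum[symmetric] card_V)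
  finally show ?thesis by simp
qed

lemma card_closed_walks_5_eq: "card closed_walks_5 = 27048"
proof -
  have "(\<Sum>a\<in>V. \<Sum>c\<in>V. codeg a c * (\<Sum>d\<in>V. adj c d * codeg d a)) =
      (\<Sum>a\<in>V. \<Sum>c\<in>V. \<Sum>b\<in>V. \<Sum>d\<in>V. \<Sum>e\<in>V. adj a b * adj b c * adj c d * adj d e * adj e a)"
  proof (intro sum.cong refl)
    fix a c
    have codeg_ac: "codeg a c = (\<Sum>b\<in>V. adj a b * adj b c)"
      by (simp add: codeg_eq_sum adj_commute[of c])
    have path3: "(\<Sum>d\<in>V. adj c d * codeg d a) = (\<Sum>d\<in>V. \<Sum>e\<in>V. adj c d * adj d e * adj e a)"
      by (simp add: codeg_eq_sum adj_commute[of a] sum_distrib_left mult.assoc)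
    show "codeg a c * (\<Sum>d\<in>V. adj c d * codeg d a) =
        (\<Sum>b\<in>V. \<Sum>d\<in>V. \<Sum>e\<in>V. adj a b * adj b c * adj c d * adj d e * adj e a)"
      unfolding codeg_ac path3 sum_distrib_right unfolding sum_distrib_left by (simp only: mult.assoc)
  qed
  also have "\<dots> = int (card closed_walks_5)"
    unfolding card_closed_walks_5 by (rule sum.cong[OF refl], rule sum.swap)
  finally have "int (card closed_walks_5) = (\<Sum>a\<in>V. 1288)"
    by (simp add: sum_codeg_sum_adj_codeg)
  then show ?thesis by (simp add: card_V)
qed

end

lemma srg_21_8_1_4_impossible: "\<not> srg_21_8_1_4 V red"
proof
  assume "srg_21_8_1_4 V red"
  then interpret srg_21_8_1_4 V red .
  show False
    using five_dvd_card_closed_walks_5 card_closed_walks_5_eq by simp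
qed

section \<open>Colourings without red B_2 and blue B_8\<close>

locale B2_B8_colouring = graph_on +
  assumes red_B2_free: "u \<in> V \<Longrightarrow> v \<in> V \<Longrightarrow> red u v \<Longrightarrow> card {w\<in>V. red u w \<and> red v w} \<le> 1"
    and blue_B8_free: "u \<in> V \<Longrightarrow> v \<in> V \<Longrightarrow> u \<noteq> v \<Longrightarrow> \<not> red u v \<Longrightarrow>
      card {w\<in>V. w \<noteq> u \<and> w \<noteq> v \<and> \<not> red u w \<and> \<not> red v w} \<le> 7"

lemma not_ramsey_prop_book_2_8_iff:
  "\<not> ramsey_prop (book 2) (book 8) N \<longleftrightarrow> (\<exists>red. B2_B8_colouring {0..<N} red)"
proof
  assume "\<not> ramsey_prop (book 2) (book 8) N"
  then obtain col where no_red: "\<not> has_copy (book 2) N col"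
    and no_blue: "\<not> has_copy (book 8) N (\<lambda>e. \<not> col e)"
    by (auto simp: ramsey_prop_def)
  define red where "red u v \<longleftrightarrow> u \<noteq> v \<and> col {u, v}" for u v :: nat
  have "B2_B8_colouring {0..<N} red"
  proof
    fix u v assume uv: "u \<in> {0..<N}" "v \<in> {0..<N}"
    have "{w\<in>{0..<N}. red u w \<and> red v w} =
        {w. w < N \<and> w \<noteq> u \<and> w \<noteq> v \<and> col {u, w} \<and> col {v, w}}"
      by (auto simp: red_def)
    then show "red u v \<Longrightarrow> card {w\<in>{0..<N}. red u w \<and> red v w} \<le> 1"
      using no_red uv unfolding has_book_copy_iff red_def by fastforce
    have "{w\<in>{0..<N}. w \<noteq> u \<and> w \<noteq> v \<and> \<not> red u w \<and> \<not> red v w} =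
        {w. w < N \<and> w \<noteq> u \<and> w \<noteq> v \<and> \<not> col {u, w} \<and> \<not> col {v, w}}"
      by (auto simp: red_def)
    then show "u \<noteq> v \<Longrightarrow> \<not> red u v \<Longrightarrow>
        card {w\<in>{0..<N}. w \<noteq> u \<and> w \<noteq> v \<and> \<not> red u w \<and> \<not> red v w} \<le> 7"
      using no_blue uv unfolding has_book_copy_iff red_def by fastforce
  qed (auto simp: red_def insert_commute)
  then show "\<exists>red. B2_B8_colouring {0..<N} red" by blast
next
  assume "\<exists>red. B2_B8_colouring {0..<N} red"
  then obtain red where "B2_B8_colouring {0..<N} red" ..
  then interpret B2_B8_colouring "{0..<N}" red .
  define col where "col e \<longleftrightarrow> (\<exists>a b. e = {a, b} \<and> red a b)" for e
  have col_pair: "col {u, w} \<longleftrightarrow> red u w" for u w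
    by (auto simp: col_def doubleton_eq_iff intro: red_sym)
  have "\<not> has_copy (book 2) N col"
  proof
    assume "has_copy (book 2) N col"
    then obtain u v where uv: "u < N" "v < N" "red u v"
      and two: "2 \<le> card {w. w < N \<and> w \<noteq> u \<and> w \<noteq> v \<and> red u w \<and> red v w}"
      unfolding has_book_copy_iff col_pair by blast
    have "{w. w < N \<and> w \<noteq> u \<and> w \<noteq> v \<and> red u w \<and> red v w} =
        {w\<in>{0..<N}. red u w \<and> red v w}"
      using red_irrefl red_sym by auto
    moreover have "card {w\<in>{0..<N}. red u w \<and> red v w} \<le> 1"
      using uv by (intro red_B2_free) auto
    ultimately show False using two by simp
  qed
  moreover have "\<not> has_copy (book 8) N (\<lambda>e. \<not> col e)"
  proof
    assume "has_copy (book 8) N (\<lambda>e. \<not> col e)"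
    then obtain u v where uv: "u < N" "v < N" "u \<noteq> v" "\<not> red u v"
      and eight: "8 \<le> card {w. w < N \<and> w \<noteq> u \<and> w \<noteq> v \<and> \<not> red u w \<and> \<not> red v w}"
      unfolding has_book_copy_iff col_pair by blast
    have "{w. w < N \<and> w \<noteq> u \<and> w \<noteq> v \<and> \<not> red u w \<and> \<not> red v w} =
        {w\<in>{0..<N}. w \<noteq> u \<and> w \<noteq> v \<and> \<not> red u w \<and> \<not> red v w}"
      by auto
    moreover have "card {w\<in>{0..<N}. w \<noteq> u \<and> w \<noteq> v \<and> \<not> red u w \<and> \<not> red v w} \<le> 7"
      using uv by (intro blue_B8_free) auto
    ultimately show False using eight by simp
  qed
  ultimately show "\<not> ramsey_prop (book 2) (book 8) N"
    unfolding ramsey_prop_def by blast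
qed

context B2_B8_colouring
begin

lemma codeg_le_1_if_red: "u \<in> V \<Longrightarrow> v \<in> V \<Longrightarrow> red u v \<Longrightarrow> codeg u v \<le> 1"
  using red_B2_free by (simp add: codeg_eq_card)

lemma codeg_0_or_1_if_red: "u \<in> V \<Longrightarrow> v \<in> V \<Longrightarrow> red v u \<Longrightarrow> codeg u v = 0 \<or> codeg u v = 1"
  using codeg_le_1_if_red[of u v] codeg_nonneg[of u v] red_sym by fastforce

lemma common_red_nbr_unique:
  assumes "x \<in> V" "y \<in> V" "red x y" "a \<in> V" "b \<in> V" "red x a" "red y a" "red x b" "red y b"
  shows "a = b"
proof (rule ccontr)
  assume "a \<noteq> b"
  then have "2 = card {a, b}" by simp
  also have "\<dots> \<le> card {w\<in>V. red x w \<and> red y w}"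
    using assms finite_V by (intro card_mono) auto
  finally show False using red_B2_free[OF assms(1-3)] by simp
qed

definition nbhd0 :: "'a \<Rightarrow> 'a set" where "nbhd0 v = {u\<in>nbhd v. codeg u v = 0}"
definition nbhd1 :: "'a \<Rightarrow> 'a set" where "nbhd1 v = {u\<in>nbhd v. codeg u v = 1}"

lemma finite_nbhd0 [simp]: "finite (nbhd0 v)" and finite_nbhd1 [simp]: "finite (nbhd1 v)"
  by (simp_all add: nbhd0_def nbhd1_def)

lemma nbhd_eq_nbhd1_Un_nbhd0: "v \<in> V \<Longrightarrow> nbhd v = nbhd1 v \<union> nbhd0 v"
  using codeg_0_or_1_if_red by (auto simp: nbhd_def nbhd0_def nbhd1_def)

lemma nbhd1_Int_nbhd0: "nbhd1 v \<inter> nbhd0 v = {}"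
  by (auto simp: nbhd0_def nbhd1_def)

lemma card_nbhd_eq: "v \<in> V \<Longrightarrow> card (nbhd v) = card (nbhd1 v) + card (nbhd0 v)"
  using nbhd_eq_nbhd1_Un_nbhd0[of v] card_Un_disjoint[OF _ _ nbhd1_Int_nbhd0] by simp

definition partner :: "'a \<Rightarrow> 'a \<Rightarrow> 'a" where
  "partner v x = (THE y. y \<in> V \<and> red x y \<and> red v y)"

lemma partner_unique:
  assumes v: "v \<in> V" and x: "x \<in> nbhd1 v" and z: "z \<in> V" "red x z" "red v z"
  shows "partner v x = z"
  unfolding partner_def
proof (rule the_equality)
  have xv: "x \<in> V" "red x v" using x red_sym by (auto simp: nbhd1_def nbhd_def)
  show "y = z" if "y \<in> V \<and> red x y \<and> red v y" for y
    using common_red_nbr_unique[OF xv(1) v xv(2)] that z by blast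
qed (use z in blast)

lemma partner:
  assumes v: "v \<in> V" and x: "x \<in> nbhd1 v"
  shows "partner v x \<in> V" "red x (partner v x)" "red v (partner v x)"
proof -
  have "card {w\<in>V. red x w \<and> red v w} = 1" using x by (simp add: nbhd1_def codeg_eq_card)
  then obtain y where "{w\<in>V. red x w \<and> red v w} = {y}" by (rule card_1_singletonE)
  then have "y \<in> V" "red x y" "red v y" by blast+
  with partner_unique[OF v x] show "partner v x \<in> V" "red x (partner v x)" "red v (partner v x)"
    by simp_all
qed

lemma partner_in_nbhd1: assumes v: "v \<in> V" and x: "x \<in> nbhd1 v" shows "partner v x \<in> nbhd1 v"
proof -
  let ?y = "partner v x"
  have xv: "x \<in> V" "red v x" using x by (auto simp: nbhd1_def nbhd_def)
  have "1 \<le> card {w\<in>V. red ?y w \<and> red v w}"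
    using xv partner[OF v x] red_sym finite_V card_mono[of _ "{x}"] by fastforce
  then have "codeg ?y v = 1"
    using codeg_le_1_if_red[of ?y v] partner[OF v x] red_sym v by (simp add: codeg_eq_card)
  then show ?thesis using partner[OF v x] by (simp add: nbhd1_def nbhd_def)
qed

lemma partner_partner: "v \<in> V \<Longrightarrow> x \<in> nbhd1 v \<Longrightarrow> partner v (partner v x) = x"
  using partner_unique[OF _ partner_in_nbhd1] partner red_sym by (auto simp: nbhd1_def nbhd_def)

text \<open>The red neighbours of v lying on a red triangle through v are matched in pairs by
  partner; no other vertex u is adjacent to both members of a pair.\<close>
lemma card_nbhd_Int_nbhd1_le:
  assumes v: "v \<in> V" and u: "u \<in> V" "u \<noteq> v"
  shows "2 * card (nbhd u \<inter> nbhd1 v) \<le> card (nbhd1 v)"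
proof -
  have inj: "inj_on (partner v) (nbhd u \<inter> nbhd1 v)"
    by (rule inj_onI) (metis IntE partner_partner v)
  have img: "partner v ` (nbhd u \<inter> nbhd1 v) \<subseteq> nbhd1 v - nbhd u"
  proof
    fix z assume "z \<in> partner v ` (nbhd u \<inter> nbhd1 v)"
    then obtain x where x: "x \<in> nbhd u" "x \<in> nbhd1 v" and z: "z = partner v x" by blast
    have xv: "x \<in> V" "red v x" "red u x" using x by (auto simp: nbhd1_def nbhd_def)
    have "z \<notin> nbhd u"
    proof
      assume "z \<in> nbhd u"
      then have "u = v"
        using common_red_nbr_unique[OF xv(1) partner(1)[OF v x(2)] partner(2)[OF v x(2)] u(1) v]
          xv partner[OF v x(2)] z red_sym by (simp add: nbhd_def)
      with u show False by simp
    qed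
    then show "z \<in> nbhd1 v - nbhd u" using partner_in_nbhd1[OF v x(2)] z by simp
  qed
  have "card (nbhd u \<inter> nbhd1 v) \<le> card (nbhd1 v - nbhd u)"
    using card_inj_on_le[OF inj img] by simp
  also have "\<dots> = card (nbhd1 v) - card (nbhd u \<inter> nbhd1 v)"
    by (simp add: card_Diff_subset_Int Int_commute)
  finally show ?thesis
    using card_mono[of "nbhd1 v" "nbhd u \<inter> nbhd1 v"] by simp
qed

lemma codeg_eq_card_Int_add:
  "v \<in> V \<Longrightarrow> codeg u v = int (card (nbhd u \<inter> nbhd1 v)) + int (card (nbhd u \<inter> nbhd0 v))"
proof -
  assume "v \<in> V"
  then have "nbhd u \<inter> nbhd v = (nbhd u \<inter> nbhd1 v) \<union> (nbhd u \<inter> nbhd0 v)"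
    using nbhd_eq_nbhd1_Un_nbhd0 by blast
  moreover have "(nbhd u \<inter> nbhd1 v) \<inter> (nbhd u \<inter> nbhd0 v) = {}"
    using nbhd1_Int_nbhd0 by blast
  ultimately show ?thesis by (simp add: codeg_def card_Un_disjoint)
qed

end

section \<open>No such colouring of K_21\<close>

locale B2_B8_colouring_21 = B2_B8_colouring +
  assumes card_V: "card V = 21"
begin

definition blue_nbhd :: "'a \<Rightarrow> 'a set" where "blue_nbhd v = {u\<in>V. u \<noteq> v \<and> \<not> red v u}"

lemma finite_blue_nbhd [simp]: "finite (blue_nbhd v)"
  using finite_V by (simp add: blue_nbhd_def)

lemma card_blue_nbhd: assumes "v \<in> V" shows "int (card (blue_nbhd v)) = 20 - deg v"
proof -
  have "blue_nbhd v = (V - {v}) - nbhd v" by (auto simp: blue_nbhd_def nbhd_def)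
  moreover have "nbhd v \<subseteq> V - {v}" using red_irrefl by (auto simp: nbhd_def)
  moreover have "card (V - {v}) = 20" using assms finite_V card_V by simp
  ultimately show ?thesis
    using card_mono[of "V - {v}" "nbhd v"] finite_V by (simp add: card_Diff_subset deg_def)
qed

text \<open>With 21 vertices, distinct non-adjacent u and v have 19 - deg u - deg v + codeg u v
  common blue neighbours.\<close>
lemma deg_add_deg_minus_codeg_ge_12:
  assumes "u \<in> V" "v \<in> V" "u \<noteq> v" "\<not> red u v"
  shows "deg u + deg v - codeg u v \<ge> 12"
proof -
  let ?B = "{w\<in>V. w \<noteq> u \<and> w \<noteq> v \<and> \<not> red u w \<and> \<not> red v w}"
  have sub: "nbhd u \<union> nbhd v \<subseteq> V - {u,v}" using assms red_irrefl red_sym by (auto simp: nbhd_def)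
  have "?B = (V - {u,v}) - (nbhd u \<union> nbhd v)" by (auto simp: nbhd_def)
  then have "card ?B = 19 - card (nbhd u \<union> nbhd v)"
    using sub assms finite_V card_V by (simp add: card_Diff_subset)
  moreover have "card (nbhd u \<union> nbhd v) + card (nbhd u \<inter> nbhd v) = card (nbhd u) + card (nbhd v)"
    using card_Un_Int[of "nbhd u" "nbhd v"] by simp
  moreover have "card (nbhd u \<union> nbhd v) \<le> 19"
    using card_mono[OF _ sub] assms finite_V card_V by simp
  ultimately show ?thesis using blue_B8_free[OF assms] by (simp add: deg_def codeg_def)
qed

definition red_slack :: "'a \<Rightarrow> int" where
  "red_slack v = (\<Sum>u\<in>nbhd v. 1 - codeg u v)"

text \<open>Each summand is 7 minus the number of common blue neighbours of u and v.\<close>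
definition blue_slack :: "'a \<Rightarrow> int" where
  "blue_slack v = (\<Sum>u\<in>blue_nbhd v. deg u + deg v - codeg u v - 12)"

definition potential :: "'a \<Rightarrow> int" where
  "potential v = red_slack v + blue_slack v + 3 * (deg v - 9)^2 - 3"

lemma red_slack_eq_sum: "red_slack v = (\<Sum>u\<in>V. if red v u then 1 - codeg u v else 0)"
  unfolding red_slack_def nbhd_def using finite_V by (simp add: sum.inter_filter)

lemma blue_slack_eq_sum:
  "blue_slack v = (\<Sum>u\<in>V. if u \<noteq> v \<and> \<not> red v u then deg u + deg v - codeg u v - 12 else 0)"
  unfolding blue_slack_def blue_nbhd_def using finite_V by (simp add: sum.inter_filter)

lemma red_slack_eq_card: assumes "v \<in> V" shows "red_slack v = int (card (nbhd0 v))"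
proof -
  have "red_slack v = (\<Sum>u\<in>nbhd v. if codeg u v = 0 then 1 else 0)"
    unfolding red_slack_def
    by (rule sum.cong) (use codeg_0_or_1_if_red assms in \<open>auto simp: nbhd_def\<close>)
  then show ?thesis by (simp add: nbhd0_def int_card_filter_eq_sum)
qed

lemma red_slack_nonneg: "v \<in> V \<Longrightarrow> red_slack v \<ge> 0"
  by (simp add: red_slack_eq_card)

lemma blue_slack_nonneg: "v \<in> V \<Longrightarrow> blue_slack v \<ge> 0"
  unfolding blue_slack_def
  using deg_add_deg_minus_codeg_ge_12 red_sym by (intro sum_nonneg) (auto simp: blue_nbhd_def)

lemma red_slack_add_blue_slack:
  assumes v: "v \<in> V"
  shows "red_slack v + blue_slack v = 33 * deg v + (\<Sum>u\<in>V. deg u) - 240 - deg v * deg v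
          - (\<Sum>u\<in>V. adj v u * deg u) - (\<Sum>u\<in>V. codeg u v)"
proof -
  have "red_slack v + blue_slack v = (\<Sum>u\<in>V. adj v u + deg u + deg v - 12 - adj v u * deg u
        - adj v u * deg v + 12 * adj v u - (if u = v then 2 * deg v - 12 else 0) - codeg u v
        + (if u = v then deg v else 0))"
    unfolding red_slack_eq_sum blue_slack_eq_sum sum.distrib[symmetric]
    by (rule sum.cong) (auto simp: adj_def red_irrefl codeg_self)
  also have "\<dots> = (\<Sum>u\<in>V. adj v u) + (\<Sum>u\<in>V. deg u) + 21 * deg v - 21 * 12
        - (\<Sum>u\<in>V. adj v u * deg u) - (\<Sum>u\<in>V. adj v u * deg v) + 12 * (\<Sum>u\<in>V. adj v u)
        - (2 * deg v - 12) - (\<Sum>u\<in>V. codeg u v) + deg v"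
    apply (simp only: sum.distrib sum_subtractf)
    using v finite_V by (simp add: sum_distrib_left[symmetric] card_V)
  also have "(\<Sum>u\<in>V. adj v u * deg v) = deg v * deg v"
    by (simp add: sum_distrib_right[symmetric] deg_eq_sum)
  finally show ?thesis by (simp add: deg_eq_sum[symmetric])
qed

lemma sum_sum_adj_deg: "(\<Sum>v\<in>V. \<Sum>u\<in>V. adj v u * deg u) = (\<Sum>u\<in>V. deg u * deg u)"
proof -
  have "(\<Sum>v\<in>V. \<Sum>u\<in>V. adj v u * deg u) = (\<Sum>u\<in>V. \<Sum>v\<in>V. adj u v * deg u)"
    by (subst sum.swap) (simp add: adj_commute)
  also have "\<dots> = (\<Sum>u\<in>V. deg u * deg u)"
    by (simp add: sum_distrib_right[symmetric] deg_eq_sum[symmetric])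
  finally show ?thesis .
qed

lemma sum_sum_codeg: "(\<Sum>v\<in>V. \<Sum>u\<in>V. codeg u v) = (\<Sum>w\<in>V. deg w * deg w)"
proof -
  have "(\<Sum>v\<in>V. \<Sum>u\<in>V. codeg u v) = (\<Sum>v\<in>V. \<Sum>u\<in>V. \<Sum>w\<in>V. adj w u * adj w v)"
    by (simp add: codeg_eq_sum adj_commute)
  also have "\<dots> = (\<Sum>v\<in>V. \<Sum>w\<in>V. \<Sum>u\<in>V. adj w u * adj w v)"
    by (rule sum.cong[OF refl], rule sum.swap)
  also have "\<dots> = (\<Sum>w\<in>V. \<Sum>v\<in>V. \<Sum>u\<in>V. adj w u * adj w v)"
    by (rule sum.swap)
  also have "\<dots> = (\<Sum>w\<in>V. deg w * deg w)"
    by (simp add: sum_distrib_right[symmetric] sum_distrib_left[symmetric] deg_eq_sum[symmetric])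
  finally show ?thesis .
qed

lemma sum_potential: "(\<Sum>v\<in>V. potential v) = 0"
proof -
  have "(\<Sum>v\<in>V. red_slack v + blue_slack v) = (\<Sum>v\<in>V. 33 * deg v + (\<Sum>u\<in>V. deg u) - 240
      - deg v * deg v - (\<Sum>u\<in>V. adj v u * deg u) - (\<Sum>u\<in>V. codeg u v))"
    by (rule sum.cong) (simp_all add: red_slack_add_blue_slack)
  also have "\<dots> = 54 * (\<Sum>u\<in>V. deg u) - 5040 - 3 * (\<Sum>w\<in>V. deg w * deg w)"
    using finite_V
    by (simp add: sum_subtractf sum.distrib sum_distrib_left[symmetric] sum_sum_adj_deg sum_sum_codeg card_V)
  finally have slacks: "(\<Sum>v\<in>V. red_slack v + blue_slack v) =
      54 * (\<Sum>u\<in>V. deg u) - 5040 - 3 * (\<Sum>w\<in>V. deg w * deg w)" .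
  have "(\<Sum>v\<in>V. potential v) =
      (\<Sum>v\<in>V. red_slack v + blue_slack v) + (\<Sum>v\<in>V. 3 * deg v * deg v - 54 * deg v + 240)"
    unfolding potential_def sum.distrib[symmetric]
    by (rule sum.cong) (simp_all add: power2_eq_square algebra_simps)
  also have "(\<Sum>v\<in>V. 3 * deg v * deg v - 54 * deg v + 240) =
      3 * (\<Sum>w\<in>V. deg w * deg w) - 54 * (\<Sum>u\<in>V. deg u) + 5040"
    using finite_V by (simp add: sum_subtractf sum.distrib sum_distrib_left[symmetric] card_V mult.assoc)
  finally show ?thesis using slacks by simp
qed

text \<open>Both differences are double sums over V of a function of (u, w) that is symmetric and
  vanishes on the diagonal, hence even.\<close>
lemma even_deg_minus_red_slack: assumes "v \<in> V" shows "even (deg v - red_slack v)"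
proof -
  have "red_slack v = (\<Sum>u\<in>V. adj v u - adj v u * codeg u v)"
    unfolding red_slack_eq_sum by (rule sum.cong) (auto simp: adj_def)
  also have "\<dots> = deg v - (\<Sum>u\<in>V. \<Sum>w\<in>V. adj v u * adj u w * adj v w)"
    by (simp add: sum_subtractf deg_eq_sum codeg_eq_sum sum_distrib_left mult.assoc)
  finally have "deg v - red_slack v = (\<Sum>u\<in>V. \<Sum>w\<in>V. adj v u * adj u w * adj v w)" by simp
  moreover have "even (\<Sum>u\<in>V. \<Sum>w\<in>V. adj v u * adj u w * adj v w)"
    using finite_V by (rule even_sum_sum_symmetric) (auto simp: adj_def dest: red_sym)
  ultimately show ?thesis by simp
qed

lemma even_blue_slack_minus: assumes v: "v \<in> V" shows "even (blue_slack v - (20 - deg v) * (deg v - 12))"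
proof -
  have "blue_slack v = (\<Sum>u\<in>blue_nbhd v. (deg u - codeg u v) + (deg v - 12))"
    unfolding blue_slack_def by (rule sum.cong) auto
  also have "\<dots> = (\<Sum>u\<in>blue_nbhd v. deg u - codeg u v) + int (card (blue_nbhd v)) * (deg v - 12)"
    by (simp add: sum.distrib)
  also have "(\<Sum>u\<in>blue_nbhd v. deg u - codeg u v) = (\<Sum>u\<in>V. (1 - adj v u) * (deg u - codeg u v))"
    unfolding blue_nbhd_def using finite_V
    by (simp add: sum.inter_filter) (rule sum.cong; auto simp: adj_def codeg_self)
  also have "\<dots> = (\<Sum>u\<in>V. \<Sum>w\<in>V. (1 - adj v u) * adj u w * (1 - adj v w))"
  proof (rule sum.cong)
    fix u assume "u \<in> V"
    have "deg u - codeg u v = (\<Sum>w\<in>V. adj u w * (1 - adj v w))"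
      by (simp add: deg_eq_sum codeg_eq_sum sum_subtractf algebra_simps)
    then show "(1 - adj v u) * (deg u - codeg u v) = (\<Sum>w\<in>V. (1 - adj v u) * adj u w * (1 - adj v w))"
      by (simp add: sum_distrib_left mult.assoc)
  qed simp
  finally have "blue_slack v - (20 - deg v) * (deg v - 12) =
      (\<Sum>u\<in>V. \<Sum>w\<in>V. (1 - adj v u) * adj u w * (1 - adj v w))"
    using card_blue_nbhd[OF v] by simp
  moreover have "even (\<Sum>u\<in>V. \<Sum>w\<in>V. (1 - adj v u) * adj u w * (1 - adj v w))"
    using finite_V by (rule even_sum_sum_symmetric) (auto simp: adj_def dest: red_sym)
  ultimately show ?thesis by simp
qed

lemma odd_slacks_if_odd_deg:
  assumes "v \<in> V" "odd (deg v)"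
  shows "odd (red_slack v)" "odd (blue_slack v)"
proof -
  show "odd (red_slack v)" using even_deg_minus_red_slack[OF assms(1)] assms(2) by auto
  have "odd ((20 - deg v) * (deg v - 12))" using assms(2) by auto
  then show "odd (blue_slack v)" using even_blue_slack_minus[OF assms(1)] by auto
qed

lemma odd_slacks_ge_1:
  assumes "v \<in> V" "odd (deg v)"
  shows "red_slack v \<ge> 1" "blue_slack v \<ge> 1"
proof -
  have "red_slack v \<noteq> 0" "blue_slack v \<noteq> 0" using odd_slacks_if_odd_deg[OF assms] by auto
  then show "red_slack v \<ge> 1" "blue_slack v \<ge> 1"
    using red_slack_nonneg[OF assms(1)] blue_slack_nonneg[OF assms(1)] by auto
qed

lemma potential_ge_1_if_deg_9:
  assumes v: "v \<in> V" and "deg v = 9" and "\<not> (red_slack v = 1 \<and> blue_slack v = 1)"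
  shows "potential v \<ge> 1"
proof -
  have "odd (deg v)" using assms(2) by simp
  note odd = odd_slacks_if_odd_deg[OF v this] and ge_1 = odd_slacks_ge_1[OF v this]
  have "red_slack v \<noteq> 2" "blue_slack v \<noteq> 2" using odd by auto
  then have "red_slack v + blue_slack v \<ge> 4" using ge_1 assms(3) by linarith
  then show ?thesis using assms(2) by (simp add: potential_def)
qed

lemma potential_if_deg_8_or_10:
  "deg v = 8 \<or> deg v = 10 \<Longrightarrow> potential v = red_slack v + blue_slack v"
  by (auto simp: potential_def)

lemma potential_ge_if_deg_not_8_9_10:
  assumes v: "v \<in> V" and deg: "deg v \<notin> {8, 9, 10}"
  shows "potential v \<ge> 11" "potential v \<ge> red_slack v + 9"
proof -
  have "potential v \<ge> red_slack v + 9 \<and> potential v \<ge> 11"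
  proof (cases "odd (deg v)")
    case True
    then have "2 \<le> \<bar>deg v - 9\<bar>" using deg by (auto simp: abs_if)
    then have "4 \<le> (deg v - 9)^2" using abs_le_square_iff[of 2 "deg v - 9"] by simp
    then show ?thesis using odd_slacks_ge_1[OF v True] unfolding potential_def by linarith
  next
    case False
    then have "3 \<le> \<bar>deg v - 9\<bar>" using deg by (auto simp: abs_if)
    then have "9 \<le> (deg v - 9)^2" using abs_le_square_iff[of 3 "deg v - 9"] by simp
    then show ?thesis using red_slack_nonneg[OF v] blue_slack_nonneg[OF v] unfolding potential_def by linarith
  qed
  then show "potential v \<ge> 11" "potential v \<ge> red_slack v + 9" by auto
qed

lemma card_blue_slack_pos_le:
  assumes "v \<in> V"
  shows "int (card {u\<in>blue_nbhd v. deg u + deg v - codeg u v - 12 \<ge> 1}) \<le> blue_slack v"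
proof -
  let ?E = "{u\<in>blue_nbhd v. deg u + deg v - codeg u v - 12 \<ge> 1}"
  have "int (card ?E) = (\<Sum>u\<in>?E. 1)" by simp
  also have "\<dots> \<le> (\<Sum>u\<in>?E. deg u + deg v - codeg u v - 12)" by (rule sum_mono) simp
  also have "\<dots> \<le> blue_slack v"
    unfolding blue_slack_def using deg_add_deg_minus_codeg_ge_12 assms red_sym
    by (intro sum_mono2) (auto simp: blue_nbhd_def finite_V)
  finally show ?thesis .
qed

text \<open>Blue neighbours u of v of degree at least 8 with zero slack have codeg u v \<ge> 5, but at
  most 4 common neighbours with nbhd1 v, so they are adjacent to the unique w in nbhd0 v.\<close>
lemma deg_9_lonely_nbr:
  assumes v: "v \<in> V" and deg_v: "deg v = 9" and "red_slack v = 1" and "blue_slack v = 1"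
  obtains w where "w \<in> nbhd0 v" "11 \<le> deg w + int (card {u\<in>blue_nbhd v. deg u \<le> 7})"
proof -
  have "card (nbhd0 v) = 1" using red_slack_eq_card[OF v] assms(3) by simp
  then obtain w where nbhd0_v: "nbhd0 v = {w}" by (rule card_1_singletonE)
  have card_nbhd1: "card (nbhd1 v) = 8" using card_nbhd_eq[OF v] deg_v \<open>card (nbhd0 v) = 1\<close> by (simp add: deg_def)
  let ?E = "{u\<in>blue_nbhd v. deg u + deg v - codeg u v - 12 \<ge> 1}"
  have "card ?E \<le> 1" using card_blue_slack_pos_le[OF v] assms(4) by simp
  have high: "{u\<in>blue_nbhd v. \<not> deg u \<le> 7} \<subseteq> ?E \<union> (nbhd w - {v})"
  proof
    fix u assume u: "u \<in> {u\<in>blue_nbhd v. \<not> deg u \<le> 7}"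
    then have uV: "u \<in> V" "u \<noteq> v" "\<not> red v u" by (auto simp: blue_nbhd_def)
    show "u \<in> ?E \<union> (nbhd w - {v})"
    proof (cases "u \<in> ?E")
      case False
      moreover have "\<not> red u v" using uV(3) red_sym by blast
      ultimately have "codeg u v = deg u - 3"
        using u deg_add_deg_minus_codeg_ge_12[OF uV(1) v uV(2)] deg_v by simp
      moreover have "2 * card (nbhd u \<inter> nbhd1 v) \<le> 8"
        using card_nbhd_Int_nbhd1_le[OF v uV(1,2)] card_nbhd1 by simp
      moreover have "deg u \<ge> 8" using u by simp
      ultimately have "card (nbhd u \<inter> nbhd0 v) \<noteq> 0"
        using codeg_eq_card_Int_add[OF v, of u] by linarith
      then have "w \<in> nbhd u" using nbhd0_v by (cases "w \<in> nbhd u") auto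
      then show ?thesis using uV red_sym by (auto simp: nbhd_def)
    qed simp
  qed
  have "w \<in> V" "red v w" using nbhd0_v by (auto simp: nbhd0_def nbhd_def)
  then have "v \<in> nbhd w" using v red_sym by (auto simp: nbhd_def)
  then have "card (nbhd w - {v}) = card (nbhd w) - 1" by simp
  moreover have "card {u\<in>blue_nbhd v. \<not> deg u \<le> 7} \<le> card ?E + card (nbhd w - {v})"
    using card_mono[OF _ high] card_Un_le[of ?E "nbhd w - {v}"] by simp
  moreover have "blue_nbhd v \<inter> {u. deg u \<le> 7} = {u\<in>blue_nbhd v. deg u \<le> 7}"
    "blue_nbhd v - {u. deg u \<le> 7} = {u\<in>blue_nbhd v. \<not> deg u \<le> 7}" by auto
  then have "card (blue_nbhd v) =
      card {u\<in>blue_nbhd v. deg u \<le> 7} + card {u\<in>blue_nbhd v. \<not> deg u \<le> 7}"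
    using card_Int_Diff[of "blue_nbhd v" "{u. deg u \<le> 7}"] by simp
  moreover have "int (card (blue_nbhd v)) = 11" using card_blue_nbhd[OF v] deg_v by simp
  moreover have "card (nbhd w) \<ge> 1" using \<open>v \<in> nbhd w\<close> by (metis One_nat_def Suc_leI card_gt_0_iff empty_iff finite_nbhd)
  ultimately show ?thesis
    using that[of w] nbhd0_v \<open>card ?E \<le> 1\<close> by (auto simp: deg_def)
qed

definition deficient :: "'a set" where
  "deficient = {v\<in>V. deg v = 9 \<and> red_slack v = 1 \<and> blue_slack v = 1}"

definition exceptional :: "'a set" where
  "exceptional = {v\<in>V. deg v \<notin> {8, 9, 10}}"

lemma finite_deficient [simp]: "finite deficient" and finite_exceptional [simp]: "finite exceptional"
  using finite_V by (simp_all add: deficient_def exceptional_def)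

lemma potential_nonneg: "v \<in> V \<Longrightarrow> v \<notin> deficient \<Longrightarrow> potential v \<ge> 0"
  using potential_ge_1_if_deg_9[of v] potential_if_deg_8_or_10[of v]
    potential_ge_if_deg_not_8_9_10[of v] red_slack_nonneg[of v] blue_slack_nonneg[of v]
  by (fastforce simp: deficient_def)

lemma sum_potential_outside_deficient: "(\<Sum>v\<in>V - deficient. potential v) = int (card deficient)"
proof -
  have "deficient \<subseteq> V" by (auto simp: deficient_def)
  then have "(\<Sum>v\<in>V. potential v) = (\<Sum>v\<in>V - deficient. potential v) + (\<Sum>v\<in>deficient. potential v)"
    using finite_V by (simp add: sum.subset_diff)
  moreover have "(\<Sum>v\<in>deficient. potential v) = - int (card deficient)"
    by (simp add: deficient_def potential_def)
  ultimately show ?thesis using sum_potential by simp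
qed

lemma card_exceptional_le_1: "card exceptional \<le> 1"
proof -
  have "11 * int (card exceptional) = (\<Sum>v\<in>exceptional. 11)" by simp
  also have "\<dots> \<le> (\<Sum>v\<in>exceptional. potential v)"
    by (rule sum_mono) (use potential_ge_if_deg_not_8_9_10 in \<open>auto simp: exceptional_def\<close>)
  also have "\<dots> \<le> (\<Sum>v\<in>V - deficient. potential v)"
    using potential_nonneg finite_V
    by (intro sum_mono2) (auto simp: exceptional_def deficient_def)
  finally have "11 * card exceptional \<le> card deficient"
    using sum_potential_outside_deficient by simp
  moreover have "card (deficient \<union> exceptional) \<le> card V"
    using finite_V by (intro card_mono) (auto simp: deficient_def exceptional_def)
  moreover have "deficient \<inter> exceptional = {}" by (auto simp: deficient_def exceptional_def)
  ultimately show ?thesis using card_V by (simp add: card_Un_disjoint)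
qed

lemma deficient_covered:
  assumes "v \<in> deficient"
  shows "exceptional \<noteq> {}" "\<exists>a\<in>{a\<in>V. deg a = 10} \<union> exceptional. v \<in> nbhd0 a"
proof -
  have v: "v \<in> V" "deg v = 9" "red_slack v = 1" "blue_slack v = 1"
    using assms by (auto simp: deficient_def)
  obtain w where w: "w \<in> nbhd0 v" and deg_w: "11 \<le> deg w + int (card {u\<in>blue_nbhd v. deg u \<le> 7})"
    using deg_9_lonely_nbr[OF v] .
  have "{u\<in>blue_nbhd v. deg u \<le> 7} \<subseteq> exceptional" by (auto simp: blue_nbhd_def exceptional_def)
  then have "card {u\<in>blue_nbhd v. deg u \<le> 7} \<le> card exceptional" by (intro card_mono) simp_all
  then have "11 \<le> deg w + int (card exceptional)" using deg_w by simp
  moreover have "w \<in> V" "v \<in> nbhd0 w"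
    using w v(1) red_sym codeg_commute by (auto simp: nbhd0_def nbhd_def)
  moreover have "w \<in> {a\<in>V. deg a = 10} \<union> exceptional \<and> exceptional \<noteq> {}"
  proof (cases "deg w \<ge> 11")
    case True
    then have "w \<in> exceptional" using \<open>w \<in> V\<close> by (auto simp: exceptional_def)
    then show ?thesis by blast
  next
    case False
    then have "card exceptional = 1" "deg w = 10"
      using \<open>11 \<le> deg w + int (card exceptional)\<close> card_exceptional_le_1 by linarith+
    then show ?thesis using \<open>w \<in> V\<close> by auto
  qed
  ultimately show "exceptional \<noteq> {}" "\<exists>a\<in>{a\<in>V. deg a = 10} \<union> exceptional. v \<in> nbhd0 a"
    by blast+
qed

lemma card_deficient_le: "int (card deficient) \<le> (\<Sum>a\<in>{a\<in>V. deg a = 10} \<union> exceptional. red_slack a)"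
proof -
  let ?A = "{a\<in>V. deg a = 10} \<union> exceptional"
  have "card deficient \<le> card (\<Union>a\<in>?A. nbhd0 a)"
    using deficient_covered(2) by (intro card_mono) (auto simp: finite_V)
  also have "\<dots> \<le> (\<Sum>a\<in>?A. card (nbhd0 a))"
    using finite_V by (intro card_UN_le) simp
  finally have "int (card deficient) \<le> (\<Sum>a\<in>?A. int (card (nbhd0 a)))"
    by (simp flip: of_nat_sum)
  also have "\<dots> = (\<Sum>a\<in>?A. red_slack a)"
    by (rule sum.cong) (auto simp: red_slack_eq_card exceptional_def)
  finally show ?thesis .
qed

lemma exceptional_empty: "exceptional = {}"
proof (rule ccontr)
  assume "exceptional \<noteq> {}"
  then have "card exceptional \<ge> 1" by (simp add: Suc_le_eq card_gt_0_iff)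
  let ?D = "{a\<in>V. deg a = 10}"
  have disjoint: "?D \<inter> exceptional = {}" by (auto simp: exceptional_def)
  have "(\<Sum>a\<in>?D \<union> exceptional. red_slack a) + 9 \<le>
      (\<Sum>a\<in>?D. red_slack a) + (\<Sum>a\<in>exceptional. red_slack a + 9)"
    using \<open>card exceptional \<ge> 1\<close> finite_V
    by (simp add: sum.union_disjoint[OF _ _ disjoint] sum.distrib)
  also have "\<dots> \<le> (\<Sum>a\<in>?D. potential a) + (\<Sum>a\<in>exceptional. potential a)"
    using potential_if_deg_8_or_10 blue_slack_nonneg potential_ge_if_deg_not_8_9_10
    by (intro add_mono sum_mono) (auto simp: exceptional_def)
  also have "\<dots> = (\<Sum>a\<in>?D \<union> exceptional. potential a)"
    using finite_V by (simp add: sum.union_disjoint[OF _ _ disjoint])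
  also have "\<dots> \<le> (\<Sum>v\<in>V - deficient. potential v)"
    using potential_nonneg finite_V
    by (intro sum_mono2) (auto simp: exceptional_def deficient_def)
  finally show False
    using sum_potential_outside_deficient card_deficient_le by simp
qed

lemma deg_8_or_10_and_slacks_0:
  assumes v: "v \<in> V"
  shows "(deg v = 8 \<or> deg v = 10) \<and> red_slack v = 0 \<and> blue_slack v = 0"
proof -
  have no_deficient: "deficient = {}"
    using deficient_covered(1) exceptional_empty by blast
  then have "\<forall>u\<in>V. potential u = 0"
    using sum_potential sum_nonneg_eq_0_iff[OF finite_V] potential_nonneg by blast
  moreover have "deg v \<in> {8, 9, 10}" using v exceptional_empty by (auto simp: exceptional_def)
  ultimately show ?thesis
    using v no_deficient potential_ge_1_if_deg_9[OF v] potential_if_deg_8_or_10[of v]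
      red_slack_nonneg[OF v] blue_slack_nonneg[OF v]
    by (auto simp: deficient_def)
qed

lemma deg_deg_codeg_eq_12:
  assumes v: "v \<in> V" and u: "u \<in> blue_nbhd v"
  shows "deg u + deg v - codeg u v = 12"
proof -
  have "\<forall>x\<in>blue_nbhd v. deg x + deg v - codeg x v - 12 = 0"
  proof (rule sum_nonneg_eq_0_iff[THEN iffD1])
    show "(\<Sum>x\<in>blue_nbhd v. deg x + deg v - codeg x v - 12) = 0"
      using deg_8_or_10_and_slacks_0[OF v] by (simp add: blue_slack_def)
    show "deg x + deg v - codeg x v - 12 \<ge> 0" if "x \<in> blue_nbhd v" for x
      using that deg_add_deg_minus_codeg_ge_12 v red_sym by (auto simp: blue_nbhd_def)
  qed simp
  then show ?thesis using u by auto
qed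

lemma nbhd0_empty: "v \<in> V \<Longrightarrow> nbhd0 v = {}"
  using deg_8_or_10_and_slacks_0 red_slack_eq_card by simp

lemma deg_eq_8: assumes v: "v \<in> V" shows "deg v = 8"
proof (rule ccontr)
  assume "deg v \<noteq> 8"
  then have "deg v = 10" "nbhd0 v = {}"
    using deg_8_or_10_and_slacks_0[OF v] nbhd0_empty[OF v] by auto
  then have "card (nbhd1 v) = 10" using card_nbhd_eq[OF v] by (simp add: deg_def)
  moreover have "int (card (blue_nbhd v)) = 10" using card_blue_nbhd[OF v] \<open>deg v = 10\<close> by simp
  then obtain u where u: "u \<in> blue_nbhd v" by (metis all_not_in_conv card.empty of_nat_0 zero_neq_numeral)
  then have uV: "u \<in> V" "u \<noteq> v" by (auto simp: blue_nbhd_def)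
  have "codeg u v = int (card (nbhd u \<inter> nbhd1 v))"
    using codeg_eq_card_Int_add[OF v, of u] \<open>nbhd0 v = {}\<close> by simp
  moreover have "2 * card (nbhd u \<inter> nbhd1 v) \<le> card (nbhd1 v)"
    using card_nbhd_Int_nbhd1_le[OF v uV] .
  ultimately have "deg u \<le> 7"
    using deg_deg_codeg_eq_12[OF v u] \<open>deg v = 10\<close> \<open>card (nbhd1 v) = 10\<close> by linarith
  then show False using deg_8_or_10_and_slacks_0[OF uV(1)] by auto
qed

lemma codeg_red: assumes "u \<in> V" "v \<in> V" "red u v" shows "codeg u v = 1"
proof -
  have "u \<in> nbhd v" using assms red_sym by (auto simp: nbhd_def)
  then have "u \<in> nbhd1 v"
    using nbhd_eq_nbhd1_Un_nbhd0[OF assms(2)] nbhd0_empty[OF assms(2)] by simp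
  then show ?thesis by (simp add: nbhd1_def)
qed

lemma codeg_blue: "u \<in> V \<Longrightarrow> v \<in> V \<Longrightarrow> u \<noteq> v \<Longrightarrow> \<not> red u v \<Longrightarrow> codeg u v = 4"
  using deg_deg_codeg_eq_12[of v u] deg_eq_8 red_sym by (fastforce simp: blue_nbhd_def)

end

sublocale B2_B8_colouring_21 \<subseteq> srg_21_8_1_4
  using card_V deg_eq_8 codeg_red codeg_blue by unfold_locales

lemma (in B2_B8_colouring) card_V_neq_21: "card V \<noteq> 21"
proof
  assume "card V = 21"
  then interpret B2_B8_colouring_21 V red by unfold_locales
  show False using srg_21_8_1_4_impossible srg_21_8_1_4_axioms by blast
qed

section \<open>A colouring of K_20\<close>

lemma card_filter_atLeastLessThan: "card {w\<in>{0..<n}. P w} = length (filter P [0..<n])"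
  by (metis distinct_card distinct_filter distinct_upt set_filter set_upt)

definition K20_red_nbhds :: "nat list list" where
"K20_red_nbhds = [[4,6,8,9,10,12,14,19],[2,4,5,8,11,12,14],[1,6,7,9,10,12,16,17],[4,7,9,11,12,14,17,18],[0,1,3,5,7,10,15,16],[1,4,6,9,13,17,18,19],[0,2,5,7,11,14,15,18],[2,3,4,6,8,13,19],[0,1,7,9,15,17,18],[0,2,3,5,8,11,13,16],[0,2,4,11,13,17,18],[1,3,6,9,10,15,19],[0,1,2,3,13,15,18,19],[5,7,9,10,12,14,15],[0,1,3,6,13,16,17],[4,6,8,11,12,13,16,17],[2,4,9,14,15,18,19],[2,3,5,8,10,14,15,19],[3,5,6,8,10,12,16],[0,5,7,11,12,16,17]]"

definition K20_red :: "nat \<Rightarrow> nat \<Rightarrow> bool" where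
  "K20_red u v \<longleftrightarrow> u < 20 \<and> v < 20 \<and> v \<in> set (K20_red_nbhds ! u)"

lemma K20_red_checks:
  "\<forall>(u, Nu)\<in>set (zip [0..<20] K20_red_nbhds). \<forall>(v, Nv)\<in>set (zip [0..<20] K20_red_nbhds).
     (v \<in> set Nu \<longleftrightarrow> u \<in> set Nv) \<and> u \<notin> set Nu \<and>
     (v \<in> set Nu \<longrightarrow> length (filter (\<lambda>w. w \<in> set Nu \<and> w \<in> set Nv) [0..<20]) \<le> 1) \<and>
     (u \<noteq> v \<and> v \<notin> set Nu \<longrightarrow>
        length (filter (\<lambda>w. w \<noteq> u \<and> w \<noteq> v \<and> w \<notin> set Nu \<and> w \<notin> set Nv) [0..<20]) \<le> 7)"
  by code_simp

lemma B2_B8_colouring_K20: "B2_B8_colouring {0..<20} K20_red"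
proof -
  have "length K20_red_nbhds = 20" by (simp add: K20_red_nbhds_def)
  then have row: "(x, K20_red_nbhds ! x) \<in> set (zip [0..<20] K20_red_nbhds)" if "x < 20" for x
    using that by (force simp: set_zip)
  show ?thesis
  proof
    fix u v :: nat
    show "K20_red u v \<Longrightarrow> K20_red v u"
      using bspec[OF bspec[OF K20_red_checks row[of u], unfolded prod.case] row[of v]]
      by (auto simp: K20_red_def)
    show "\<not> K20_red u u"
      using bspec[OF bspec[OF K20_red_checks row[of u], unfolded prod.case] row[of u]]
      by (auto simp: K20_red_def)
    assume "u \<in> {0..<20}" "v \<in> {0..<20}"
    then have uv: "u < 20" "v < 20" by auto
    note checks = bspec[OF bspec[OF K20_red_checks row[OF uv(1)], unfolded prod.case] row[OF uv(2)],
        unfolded prod.case]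
    have "{w\<in>{0..<20}. K20_red u w \<and> K20_red v w} =
        {w\<in>{0..<20}. w \<in> set (K20_red_nbhds ! u) \<and> w \<in> set (K20_red_nbhds ! v)}"
      "{w\<in>{0..<20}. w \<noteq> u \<and> w \<noteq> v \<and> \<not> K20_red u w \<and> \<not> K20_red v w} =
        {w\<in>{0..<20}. w \<noteq> u \<and> w \<noteq> v \<and> w \<notin> set (K20_red_nbhds ! u) \<and> w \<notin> set (K20_red_nbhds ! v)}"
      using uv by (auto simp: K20_red_def)
    moreover have "K20_red u v \<longleftrightarrow> v \<in> set (K20_red_nbhds ! u)"
      using uv by (simp add: K20_red_def)
    ultimately show "K20_red u v \<Longrightarrow> card {w\<in>{0..<20}. K20_red u w \<and> K20_red v w} \<le> 1"
      "u \<noteq> v \<Longrightarrow> \<not> K20_red u v \<Longrightarrow>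
        card {w\<in>{0..<20}. w \<noteq> u \<and> w \<noteq> v \<and> \<not> K20_red u w \<and> \<not> K20_red v w} \<le> 7"
      using checks by (simp_all only: card_filter_atLeastLessThan) blast+
  qed simp
qed

theorem mainTheorem4:
  shows "ramsey_number (book 2) (book 8) = 21"
proof -
  have "ramsey_prop (book 2) (book 8) 21"
    using not_ramsey_prop_book_2_8_iff B2_B8_colouring.card_V_neq_21 by fastforce
  moreover have "\<not> ramsey_prop (book 2) (book 8) 20"
    using not_ramsey_prop_book_2_8_iff B2_B8_colouring_K20 by blast
  ultimately show ?thesis
    using ramsey_number_eqI[of "book 2" "book 8" 20] by simp
qed

end
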